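(* Let $c>0$ and for integers $d\ge0$ let $\lambda_d=I_d(c)/I_0(c)$. Then $$\frac{9}{2\pi^2}\sum_{\substack{d\ge1\\ d\not\equiv0 \ (\mathrm{mod}\ 3)}}\frac{\lambda_d}{d^2}>\frac{4}{\pi^2}\sum_{\substack{d\ge1\\ d\text{ odd}}}\frac{\lambda_d}{d^2}.$$ Equivalently, for the spherical noise operator $U_g$ on $S^1$ with parameter $c$, a partition of $S^1$ into three arcs of angle $2\pi/3$ has strictly larger value of $\sum_i[\int_{S^1}1_{H_i}U_g1_{H_i}\,d\sigma-\sigma(H_i)^2]$ than a partition into two arcs of angle $\pi$.
   Context: $I_\alpha(x)=\frac{(x/2)^\alpha}{\sqrt\pi\,\Gamma(\alpha+1/2)}\int_{-1}^1e^{xt}(1-t^2)^{\alpha-1/2}\,dt$ is the modified Bessel function of the first kind. In the paper $c=\rho rs/(1-\rho^2)$ with $0<\rho<1$, $r,s>0$. $\sigma$ is normalized Haar measure on $S^1$, $g(t)=e^{ct}/(\frac1\pi\int_0^\pi e^{c\cos\theta}d\theta)$, $U_gu(x)=\int_{S^1}g(\langle x,y\rangle)u(y)\,d\sigma(y)$; $\lambda_d$ are the Fourier multipliers of $U_g$. *)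

theory Defs
  imports "HOL-Analysis.Analysis"
begin

text \<open>Modified Bessel function of the first kind, via the Poisson-type integral
  I_a(x) = (x/2)^a / (sqrt pi * Gamma(a + 1/2)) * int_{-1}^{1} e^{x t} (1 - t^2)^{a - 1/2} dt
  (Lebesgue integral; for a = 0 the integrand has integrable endpoint singularities).\<close>
definition besselI :: "real \<Rightarrow> real \<Rightarrow> real" where
  "besselI a x = (x / 2) powr a / (sqrt pi * Gamma (a + 1/2)) *
     (LBINT t=-1..1. exp (x * t) * (1 - t\<^sup>2) powr (a - 1/2))"

definition lam :: "real \<Rightarrow> nat \<Rightarrow> real" where
  "lam c d = besselI (real d) c / besselI 0 c"

end

theory Submission
  imports Defs
begin

text \<open>Write \<open>w\<^sub>r(t) = exp(c t) (1 - t^2)^r\<close> on \<open>[-1,1]\<close>. Integrating by parts,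
  \<open>c \<integral> w\<^sub>r\<^sub>+\<^sub>1 = 2(r+1) \<integral> t w\<^sub>r \<le> 2(r+1) \<integral> w\<^sub>r\<close>, which for \<open>r = n - 1/2\<close> says \<open>I\<^sub>n\<^sub>+\<^sub>1(c) \<le> I\<^sub>n(c)\<close>.
  Hence \<open>\<lambda>\<^sub>d / d^2\<close> is nonnegative and decreasing for \<open>d \<ge> 1\<close>, and positive at \<open>d = 1\<close>.
  For such a sequence, the odd \<open>d\<close> split into those prime to 6 and those \<open>\<equiv> 3 (mod 6)\<close>; the latter
  are the successors of the \<open>d \<equiv> 2 (mod 6)\<close>, which are prime to 3 as well. So the sum over odd \<open>d\<close>
  is at most the positive sum over \<open>d\<close> prime to 3, and \<open>4 < 9/2\<close> gives the strict inequality.\<close>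

definition bessel_weight :: "real \<Rightarrow> real \<Rightarrow> real \<Rightarrow> real" where
  "bessel_weight c r t = exp (c * t) * (1 - t\<^sup>2) powr r"

lemma bessel_weight_nonneg: "0 \<le> bessel_weight c r t"
  by (simp add: bessel_weight_def)

text \<open>\<open>0 < r\<close> is needed since \<open>0 powr 0 = 0\<close>: for \<open>r = 0\<close> the weight drops to 0 at \<open>\<plusminus>1\<close>.\<close>

lemma continuous_on_bessel_weight:
  assumes "0 < r"
  shows "continuous_on {-1..1} (bessel_weight c r)"
  unfolding bessel_weight_def using assms
  by (intro continuous_intros continuous_on_powr') (auto simp: abs_square_le_1 abs_le_iff)

lemma bessel_weight_integrable:
  "0 < r \<Longrightarrow> bessel_weight c r integrable_on {-1..1}"
  by (rule integrable_continuous_interval) (rule continuous_on_bessel_weight)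

lemma exp_neg_le_exp_mult:
  fixes c t :: real
  assumes "0 \<le> c" "\<bar>t\<bar> \<le> 1"
  shows "exp (-c) \<le> exp (c * t)"
proof -
  have "c * (-1) \<le> c * t" using assms by (intro mult_left_mono) auto
  then show ?thesis by simp
qed

lemma besselI_eq_integral:
  assumes "0 < c" "0 < n"
  shows "besselI (real n) c = (c/2)^n / (sqrt pi * Gamma (real n + 1/2)) *
           integral {-1..1} (bessel_weight c (real n - 1/2))"
proof -
  have "(LBINT t=ereal (-1)..ereal 1. bessel_weight c (real n - 1/2) t)
          = integral {-1..1} (bessel_weight c (real n - 1/2))"
    using assms
    by (intro interval_integral_eq_integral borel_integrable_atLeastAtMost' continuous_on_bessel_weight)
      auto
  then show ?thesis
    using assms unfolding besselI_def by (simp add: powr_realpow one_ereal_def bessel_weight_def)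
qed

lemma bessel_weight_integral_by_parts:
  assumes "0 < r"
  shows "c * integral {-1..1} (bessel_weight c (r + 1))
           = 2 * (r + 1) * integral {-1..1} (\<lambda>t. t * bessel_weight c r t)"
proof -
  define F' where "F' t = c * bessel_weight c (r + 1) t - 2 * (r + 1) * (t * bessel_weight c r t)"
    for t
  have "(bessel_weight c (r + 1) has_vector_derivative F' t) (at t)" if t: "t \<in> {-1<..<1}" for t
  proof -
    have "1 - t\<^sup>2 > 0" using t by (simp add: abs_square_less_1 abs_less_iff)
    then have d_powr: "((\<lambda>t. (1 - t\<^sup>2) powr (r + 1)) has_real_derivative
                 (r + 1) * (1 - t\<^sup>2) powr (r + 1 - of_nat 1) * (- (2 * t))) (at t)"
      by (intro DERIV_fun_powr) (auto intro!: derivative_eq_intros)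
    have d_exp: "((\<lambda>t. exp (c * t)) has_real_derivative exp (c * t) * c) (at t)"
      by (auto intro!: derivative_eq_intros)
    have "F' t = exp (c * t) * c * (1 - t\<^sup>2) powr (r + 1)
        + (r + 1) * (1 - t\<^sup>2) powr (r + 1 - of_nat 1) * (- (2 * t)) * exp (c * t)"
      by (simp add: F'_def bessel_weight_def algebra_simps)
    with DERIV_mult[OF d_exp d_powr] show ?thesis
      unfolding has_real_derivative_iff_has_vector_derivative[symmetric] bessel_weight_def[abs_def]
      by simp
  qed
  then have "(F' has_integral bessel_weight c (r + 1) 1 - bessel_weight c (r + 1) (-1)) {-1..1}"
    using assms by (intro fundamental_theorem_of_calculus_interior continuous_on_bessel_weight) auto
  then have "(F' has_integral 0) {-1..1}"
    using assms by (simp add: bessel_weight_def)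
  moreover have "integral {-1..1} F' = c * integral {-1..1} (bessel_weight c (r + 1))
      - 2 * (r + 1) * integral {-1..1} (\<lambda>t. t * bessel_weight c r t)"
    unfolding F'_def using assms
    by (subst integral_diff)
      (auto intro!: integrable_continuous_interval continuous_intros continuous_on_bessel_weight)
  ultimately show ?thesis by (simp add: integral_unique)
qed

lemma besselI_nonneg:
  assumes "0 < c" "0 < n"
  shows "0 \<le> besselI (real n) c"
proof -
  have "0 \<le> integral {-1..1} (bessel_weight c (real n - 1/2))"
    using assms by (intro integral_nonneg bessel_weight_integrable bessel_weight_nonneg) auto
  moreover have "0 < Gamma (real n + 1/2)" by (rule Gamma_real_pos) simp
  ultimately show ?thesis using assms by (simp add: besselI_eq_integral)
qed

lemma besselI_Suc_le:
  assumes "0 < c" "0 < n"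
  shows "besselI (real (Suc n)) c \<le> besselI (real n) c"
proof -
  define r where "r = real n - 1/2"
  define G where "G = Gamma (real n + 1/2)"
  have r: "0 < r" "2 * (r + 1) = 2 * real n + 1" "r + 1 = real (Suc n) - 1/2"
    using assms by (auto simp: r_def)
  have "0 < G" unfolding G_def by (rule Gamma_real_pos) simp
  have "real n + 1/2 \<notin> \<int>\<^sub>\<le>\<^sub>0" using nonpos_Ints_nonpos by force
  then have Gamma_Suc: "Gamma (real (Suc n) + 1/2) = (real n + 1/2) * G"
    using Gamma_plus1[of "real n + 1/2"] unfolding G_def by (simp add: algebra_simps)
  have "t * bessel_weight c r t \<le> bessel_weight c r t" if "t \<le> 1" for t
    using mult_right_mono[OF that bessel_weight_nonneg] by simp
  then have t_le_1: "integral {-1..1} (\<lambda>t. t * bessel_weight c r t) \<le> integral {-1..1} (bessel_weight c r)"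
    using r(1)
    by (intro integral_le bessel_weight_integrable integrable_continuous_interval continuous_intros
        continuous_on_bessel_weight) auto
  have "besselI (real (Suc n)) c
          = (c/2)^Suc n / (sqrt pi * ((real n + 1/2) * G)) * integral {-1..1} (bessel_weight c (r + 1))"
    using besselI_eq_integral[OF assms(1), of "Suc n"] unfolding Gamma_Suc r(3)[symmetric] by simp
  also have "\<dots> = (c/2)^n / (sqrt pi * G) * (c * integral {-1..1} (bessel_weight c (r + 1)) / (2 * real n + 1))"
    using \<open>0 < G\<close> by (simp add: field_simps)
  also have "\<dots> = (c/2)^n / (sqrt pi * G) * integral {-1..1} (\<lambda>t. t * bessel_weight c r t)"
    unfolding bessel_weight_integral_by_parts[OF r(1)] r(2) by simp
  also have "\<dots> \<le> (c/2)^n / (sqrt pi * G) * integral {-1..1} (bessel_weight c r)"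
    using t_le_1 \<open>0 < G\<close> assms by (intro mult_left_mono) auto
  also have "\<dots> = besselI (real n) c"
    using assms by (simp add: besselI_eq_integral G_def r_def)
  finally show ?thesis .
qed

lemma besselI_one_pos:
  assumes "0 < c"
  shows "0 < besselI 1 c"
proof -
  have "((\<lambda>t. exp (-c) * (1 - t\<^sup>2)) has_integral exp (-c) * (1 - 1^3/3) - exp (-c) * (-1 - (-1)^3/3))
          {-1..1}"
    by (intro fundamental_theorem_of_calculus_interior[where f = "\<lambda>t. exp (-c) * (t - t^3/3)"])
      (auto intro!: continuous_intros derivative_eq_intros
        simp: has_real_derivative_iff_has_vector_derivative[symmetric] power2_eq_square algebra_simps)
  then have lower: "((\<lambda>t. exp (-c) * (1 - t\<^sup>2)) has_integral 4 * exp (-c) / 3) {-1..1}"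
    by simp
  have "4 * exp (-c) / 3 \<le> integral {-1..1} (bessel_weight c (1/2))"
  proof (rule has_integral_le[OF lower integrable_integral[OF bessel_weight_integrable]])
    fix t :: real assume "t \<in> {-1..1}"
    then have t: "\<bar>t\<bar> \<le> 1" "0 \<le> 1 - t\<^sup>2" "1 - t\<^sup>2 \<le> 1"
      by (auto simp: abs_square_le_1 abs_le_iff)
    have "(1 - t\<^sup>2) powr 1 \<le> (1 - t\<^sup>2) powr (1/2)"
      using t by (intro powr_mono') auto
    then show "exp (-c) * (1 - t\<^sup>2) \<le> bessel_weight c (1/2) t"
      unfolding bessel_weight_def using t assms exp_neg_le_exp_mult[of c t]
      by (intro mult_mono) auto
  qed simp
  then have "0 < integral {-1..1} (bessel_weight c (1/2))"
    using exp_gt_zero[of "-c"] by linarith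
  moreover have "0 < Gamma (3/2 :: real)" by (rule Gamma_real_pos) simp
  moreover have "besselI 1 c = c / 2 / (sqrt pi * Gamma (3/2)) * integral {-1..1} (bessel_weight c (1/2))"
    using besselI_eq_integral[OF assms, of 1] by (simp add: numeral_eq_Suc)
  ultimately show ?thesis
    using assms by (simp only:) (intro mult_pos_pos divide_pos_pos; simp)
qed

lemma arcsin_density_integral:
  shows "set_integrable lborel {-1<..<1} (\<lambda>t. inverse (sqrt (1 - t\<^sup>2)))"
    and "(LINT t:{-1<..<1}|lborel. inverse (sqrt (1 - t\<^sup>2))) = pi"
proof -
  have arcsin_tendsto: "(arcsin \<longlongrightarrow> arcsin x) (at x within {-1..1})" if "x \<in> {-1..1}" for x
    using continuous_on_arcsin' that unfolding continuous_on_def by blast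
  have "(arcsin \<longlongrightarrow> -pi/2) (at_right (-1))"
    using arcsin_tendsto[of "-1"] at_within_Icc_at_right[of "-1::real" 1] by simp
  then have lim_left: "((arcsin \<circ> real_of_ereal) \<longlongrightarrow> -pi/2) (at_right (ereal (-1)))"
    unfolding ereal_tendsto_simps1 .
  have "(arcsin \<longlongrightarrow> pi/2) (at_left 1)"
    using arcsin_tendsto[of 1] at_within_Icc_at_left[of "-1::real" 1] by simp
  then have lim_right: "((arcsin \<circ> real_of_ereal) \<longlongrightarrow> pi/2) (at_left (ereal 1))"
    unfolding ereal_tendsto_simps1 .
  have inner: "0 < 1 - x\<^sup>2" if "ereal (-1) < ereal x" "ereal x < ereal 1" for x
    using that by (simp add: abs_square_less_1 abs_less_iff)
  have deriv: "DERIV arcsin x :> inverse (sqrt (1 - x\<^sup>2))"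
    if "ereal (-1) < ereal x" "ereal x < ereal 1" for x
    using that by (intro DERIV_arcsin) auto
  have cont: "isCont (\<lambda>t. inverse (sqrt (1 - t\<^sup>2))) x"
    if "ereal (-1) < ereal x" "ereal x < ereal 1" for x
    using inner[OF that] by (intro continuous_intros) auto
  have nonneg: "AE x in lborel. ereal (-1) < ereal x \<longrightarrow> ereal x < ereal 1 \<longrightarrow>
      0 \<le> inverse (sqrt (1 - x\<^sup>2))"
    using inner by (intro AE_I2) (simp add: less_imp_le)
  have "ereal (-1) < ereal 1" by simp
  note FTC = interval_integral_FTC_nonneg[OF this deriv cont nonneg lim_left lim_right]
  have S: "{-1<..<1} = einterval (ereal (-1)) (ereal 1)" by auto
  show "set_integrable lborel {-1<..<1} (\<lambda>t. inverse (sqrt (1 - t\<^sup>2)))"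
    unfolding S by (rule FTC(1))
  show "(LINT t:{-1<..<1}|lborel. inverse (sqrt (1 - t\<^sup>2))) = pi"
    using FTC(2) unfolding S by (simp add: interval_lebesgue_integral_le_eq)
qed

lemma besselI_zero_pos:
  assumes "0 < c"
  shows "0 < besselI 0 c"
proof -
  define h where "h t = inverse (sqrt (1 - t\<^sup>2))" for t :: real
  note h = arcsin_density_integral[folded h_def]
  have inner: "0 < 1 - t\<^sup>2" if "t \<in> {-1<..<1}" for t :: real
    using that by (simp add: abs_square_less_1 abs_less_iff)
  have weight: "bessel_weight c (-1/2) t = exp (c * t) * h t" if "t \<in> {-1<..<1}" for t
    using inner[OF that] by (simp add: bessel_weight_def h_def powr_minus powr_half_sqrt)
  have exp_bounds: "exp (-c) \<le> exp (c * t)" "exp (c * t) \<le> exp c" if "t \<in> {-1<..<1}" for t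
    using that assms exp_neg_le_exp_mult[of c t] by (auto intro: mult_left_le)
  have h_nonneg: "0 \<le> h t" if "t \<in> {-1<..<1}" for t
    using inner[OF that] by (simp add: h_def)
  have integrable: "set_integrable lborel {-1<..<1} (bessel_weight c (-1/2))"
  proof (rule set_integrable_bound[OF set_integrable_mult_right[OF h(1), of "exp c"]])
    show "set_borel_measurable lborel {-1<..<1} (bessel_weight c (-1/2))"
      unfolding set_borel_measurable_def bessel_weight_def by measurable
    show "AE t in lborel. t \<in> {-1<..<1} \<longrightarrow> norm (bessel_weight c (-1/2) t) \<le> norm (exp c * h t)"
      using weight exp_bounds h_nonneg by (intro AE_I2) (simp add: abs_mult mult_right_mono)
  qed
  have "exp (-c) * pi \<le> (LINT t:{-1<..<1}|lborel. bessel_weight c (-1/2) t)"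
    using set_integral_mono[OF set_integrable_mult_right[OF h(1)] integrable, of "exp (-c)"]
      weight exp_bounds h_nonneg
    by (simp add: set_integral_mult_right h(2) mult_right_mono)
  then have "0 < (LINT t:{-1<..<1}|lborel. bessel_weight c (-1/2) t)"
    by (rule less_le_trans[OF mult_pos_pos[OF exp_gt_zero pi_gt_zero]])
  moreover have "(LBINT t=-1..1. exp (c * t) * (1 - t\<^sup>2) powr (0 - 1/2))
      = (LINT t:{-1<..<1}|lborel. bessel_weight c (-1/2) t)"
    by (simp add: interval_lebesgue_integral_le_eq one_ereal_def bessel_weight_def)
  moreover have "0 < Gamma (1/2 :: real)" by (rule Gamma_real_pos) simp
  ultimately show ?thesis
    using assms unfolding besselI_def by simp
qed

lemma lam_nonneg:
  assumes "0 < c"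
  shows "0 \<le> lam c d"
  using besselI_zero_pos[OF assms] besselI_nonneg[OF assms, of d]
  by (cases "d = 0") (simp_all add: lam_def)

lemma lam_Suc_le:
  assumes "0 < c" "0 < d"
  shows "lam c (Suc d) \<le> lam c d"
  using besselI_Suc_le[OF assms] besselI_zero_pos[OF assms(1)]
  unfolding lam_def by (simp add: divide_right_mono)

lemma lam_le_lam_one:
  assumes "0 < c" "0 < d"
  shows "lam c d \<le> lam c 1"
  using assms(2)
proof (induction d rule: nat_induct_non_zero)
  case (Suc d)
  then show ?case using lam_Suc_le[OF assms(1) Suc(1)] by simp
qed simp

lemma lam_one_pos: "0 < c \<Longrightarrow> 0 < lam c 1"
  using besselI_zero_pos besselI_one_pos by (simp add: lam_def)

lemma summable_on_lam_div_square:
  assumes "0 < c"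
  shows "(\<lambda>d. lam c d / (real d)\<^sup>2) summable_on A"
proof -
  have "summable (\<lambda>d. lam c 1 * inverse (real d ^ 2))"
    by (intro summable_mult inverse_power_summable) simp
  then have majorant: "(\<lambda>d. lam c 1 * inverse (real d ^ 2)) summable_on UNIV"
    using lam_one_pos[OF assms] by (subst summable_on_UNIV_nonneg_real_iff) auto
  have bound: "lam c d / (real d)\<^sup>2 \<le> lam c 1 * inverse (real d ^ 2)" for d
  proof (cases "d = 0")
    case False
    then have "lam c d / (real d)\<^sup>2 \<le> lam c 1 / (real d)\<^sup>2"
      using lam_le_lam_one[OF assms] by (intro divide_right_mono) auto
    then show ?thesis by (simp add: divide_inverse)
  qed simp
  have "(\<lambda>d. lam c d / (real d)\<^sup>2) summable_on UNIV"
    using summable_on_comparison_test[OF majorant bound] lam_nonneg[OF assms] by simp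
  then show ?thesis by (rule summable_on_subset) simp
qed

lemma lam_div_square_Suc_le:
  assumes "0 < c" "0 < d"
  shows "lam c (Suc d) / (real (Suc d))\<^sup>2 \<le> lam c d / (real d)\<^sup>2"
proof -
  have "lam c (Suc d) / (real (Suc d))\<^sup>2 \<le> lam c d / (real (Suc d))\<^sup>2"
    using lam_Suc_le[OF assms] by (simp add: divide_right_mono)
  also have "\<dots> \<le> lam c d / (real d)\<^sup>2"
    using lam_nonneg[OF assms(1)] assms(2) by (intro divide_left_mono) auto
  finally show ?thesis .
qed

lemma infsum_odd_le_infsum_not_dvd_3:
  fixes a :: "nat \<Rightarrow> real"
  assumes nonneg: "\<And>d. 0 \<le> a d" and "a summable_on UNIV"
    and decreasing: "\<And>d. 0 < d \<Longrightarrow> a (Suc d) \<le> a d"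
  shows "(\<Sum>\<^sub>\<infinity>d\<in>{d. d \<ge> 1 \<and> odd d}. a d) \<le> (\<Sum>\<^sub>\<infinity>d\<in>{d. d \<ge> 1 \<and> \<not> 3 dvd d}. a d)"
proof -
  have summable: "a summable_on A" for A
    using summable_on_subset[OF \<open>a summable_on UNIV\<close>] by simp
  define P where "P = {d::nat. d \<ge> 1 \<and> odd d \<and> \<not> 3 dvd d}"
  define E where "E = {d::nat. d mod 6 = 2}"
  have odd_split: "{d. d \<ge> 1 \<and> odd d} = P \<union> Suc ` E"
    unfolding P_def E_def by (auto simp: image_iff; presburger)
  have disjoint: "P \<inter> Suc ` E = {}" "P \<inter> E = {}"
    unfolding P_def E_def by (auto; presburger)+
  have covered: "P \<union> E \<subseteq> {d. d \<ge> 1 \<and> \<not> 3 dvd d}"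
    unfolding P_def E_def by (auto; presburger)
  have "infsum a (Suc ` E) = infsum (a \<circ> Suc) E"
    by (rule infsum_reindex) simp
  also have "\<dots> \<le> infsum a E"
  proof (rule infsum_mono)
    show "(a \<circ> Suc) summable_on E"
      using summable[of "Suc ` E"] by (simp add: summable_on_reindex)
    show "(a \<circ> Suc) d \<le> a d" if "d \<in> E" for d
      using that decreasing[of d] by (auto simp: E_def)
  qed (rule summable)
  finally have shift: "infsum a (Suc ` E) \<le> infsum a E" .
  have "(\<Sum>\<^sub>\<infinity>d\<in>{d. d \<ge> 1 \<and> odd d}. a d) = infsum a P + infsum a (Suc ` E)"
    unfolding odd_split by (rule infsum_Un_disjoint[OF summable summable disjoint(1)])
  also have "\<dots> \<le> infsum a P + infsum a E"
    using shift by simp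
  also have "\<dots> = infsum a (P \<union> E)"
    by (rule infsum_Un_disjoint[OF summable summable disjoint(2), symmetric])
  also have "\<dots> \<le> (\<Sum>\<^sub>\<infinity>d\<in>{d. d \<ge> 1 \<and> \<not> 3 dvd d}. a d)"
    using covered by (intro infsum_mono2 summable nonneg)
  finally show ?thesis .
qed

theorem mainTheorem13:
  fixes c :: real
  assumes "c > 0"
  shows "9 / (2 * pi\<^sup>2) * (\<Sum>\<^sub>\<infinity>d\<in>{d::nat. d \<ge> 1 \<and> \<not> 3 dvd d}. lam c d / (real d)\<^sup>2)
       > 4 / pi\<^sup>2 * (\<Sum>\<^sub>\<infinity>d\<in>{d::nat. d \<ge> 1 \<and> odd d}. lam c d / (real d)\<^sup>2)"
proof -
  let ?a = "\<lambda>d. lam c d / (real d)\<^sup>2"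
  let ?S3 = "\<Sum>\<^sub>\<infinity>d\<in>{d::nat. d \<ge> 1 \<and> \<not> 3 dvd d}. ?a d"
  let ?S2 = "\<Sum>\<^sub>\<infinity>d\<in>{d::nat. d \<ge> 1 \<and> odd d}. ?a d"
  have nonneg: "0 \<le> ?a d" for d
    using lam_nonneg[OF assms] by simp
  have "0 < (\<Sum>\<^sub>\<infinity>d\<in>{1}. ?a d)"
    using lam_one_pos[OF assms] by simp
  also have "\<dots> \<le> ?S3"
    using assms by (intro infsum_mono2 summable_on_lam_div_square nonneg) auto
  finally have "0 < ?S3" .
  have "?S2 \<le> ?S3"
    by (rule infsum_odd_le_infsum_not_dvd_3[OF nonneg summable_on_lam_div_square[OF assms]
          lam_div_square_Suc_le[OF assms]])
  then have "4 / pi\<^sup>2 * ?S2 \<le> 4 / pi\<^sup>2 * ?S3"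
    by (rule mult_left_mono) simp
  also have "\<dots> < 9 / (2 * pi\<^sup>2) * ?S3"
    using \<open>0 < ?S3\<close> by (intro mult_strict_right_mono) (simp_all add: divide_simps)
  finally show ?thesis .
qed

end
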